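(* Let $k\ge2$ and let $(a(n))_{n\ge0}$ and $(b(n))_{n\ge0}$ be $k$-automatic sequences. Then the sequence $(c(n))_{n\ge0}$ defined by $c(n)=1$ if $a(nk^\lambda+s)=b(nk^\lambda+s)$ for all integers $\lambda\ge0$ and $0\le s<k^\lambda$, and $c(n)=0$ otherwise, is $k$-automatic.
   Context: A sequence $u$ on a finite alphabet is $k$-automatic if there is a finite set of states $Q$, a map $\delta:Q\times\{0,\dots,k-1\}\to Q$ extended to words letter by letter, an initial state $q_0$ and an output map $\tau$ such that $u(n)=\tau(\delta(q_0,(n)_k))$ for all $n\ge0$, where $(n)_k$ is the base-$k$ expansion of $n$ (most significant digit first; $(0)_k$ is the empty word). *)

theory Defs
  imports Main
begin

fun base_digits :: "nat \<Rightarrow> nat \<Rightarrow> nat list" where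
  "base_digits k n = (if k < 2 \<or> n = 0 then [] else base_digits k (n div k) @ [n mod k])"

declare base_digits.simps [simp del]

text \<open>The output alphabet is
  automatically finite, being the image of the finite set Q under tau.\<close>
definition k_automatic :: "nat \<Rightarrow> (nat \<Rightarrow> 'a) \<Rightarrow> bool" where
  "k_automatic k u \<longleftrightarrow>
     (\<exists>(Q::nat set) (delta::nat \<Rightarrow> nat \<Rightarrow> nat) q0 (tau::nat \<Rightarrow> 'a).
        finite Q \<and> q0 \<in> Q \<and> (\<forall>q\<in>Q. \<forall>d<k. delta q d \<in> Q) \<and>
        (\<forall>n. u n = tau (foldl delta q0 (base_digits k n))))"

end

theory Submission
  imports Defs
begin

text \<open>Reading the base-k expansion of n k^l + s, for s < k^l, means reading the expansion of
  n and then the l-digit word of s (with leading zeros), and every word over the digits arises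
  this way.  Hence for n > 0 the condition defining c(n) says exactly that the pair of states
  reached by the automata of a and b on the expansion of n is good: from it, every further
  word leads to equal outputs.  So the product automaton, with goodness as output, computes c.\<close>

definition digits_value :: "nat \<Rightarrow> nat list \<Rightarrow> nat" where
  "digits_value k w = foldl (\<lambda>v d. v * k + d) 0 w"

lemma digits_value_snoc [simp]: "digits_value k (w @ [d]) = digits_value k w * k + d"
  by (simp add: digits_value_def)

lemma digits_value_less:
  assumes "set w \<subseteq> {..<k}"
  shows "digits_value k w < k ^ length w"
  using assms
proof (induction w rule: rev_induct)
  case Nil
  then show ?case by (simp add: digits_value_def)
next
  case (snoc d w)
  then have IH: "digits_value k w + 1 \<le> k ^ length w" and "d < k" by auto
  then have "digits_value k w * k + d < (digits_value k w + 1) * k" by simp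
  also have "\<dots> \<le> k ^ length w * k" using IH by (rule mult_right_mono) simp
  finally show ?case by (simp add: mult.commute)
qed

lemma digits_value_surj:
  assumes "k > 0" and "s < k ^ l"
  shows "\<exists>w. length w = l \<and> set w \<subseteq> {..<k} \<and> digits_value k w = s"
  using assms(2)
proof (induction l arbitrary: s)
  case 0
  then show ?case by (simp add: digits_value_def)
next
  case (Suc l)
  then have "s div k < k ^ l"
    by (simp add: less_mult_imp_div_less mult.commute)
  then obtain w where "length w = l" "set w \<subseteq> {..<k}" "digits_value k w = s div k"
    using Suc.IH by blast
  with \<open>k > 0\<close> have "length (w @ [s mod k]) = Suc l \<and> set (w @ [s mod k]) \<subseteq> {..<k}
      \<and> digits_value k (w @ [s mod k]) = s"
    by simp
  then show ?case by blast
qed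

lemma base_digits_less: "set (base_digits k n) \<subseteq> {..<k}"
proof (induction k n rule: base_digits.induct)
  case (1 k n)
  then show ?case by (subst base_digits.simps) auto
qed

lemma base_digits_eq_Nil_iff:
  assumes "k \<ge> 2"
  shows "base_digits k n = [] \<longleftrightarrow> n = 0"
  using assms by (subst base_digits.simps) simp

lemma base_digits_snoc:
  assumes "k \<ge> 2" and "m > 0" and "d < k"
  shows "base_digits k (m * k + d) = base_digits k m @ [d]"
  using assms by (subst base_digits.simps) simp

lemma base_digits_append:
  assumes "k \<ge> 2" and "n > 0" and "set w \<subseteq> {..<k}"
  shows "base_digits k (n * k ^ length w + digits_value k w) = base_digits k n @ w"
  using assms(3)
proof (induction w rule: rev_induct)
  case Nil
  then show ?case by (simp add: digits_value_def)
next
  case (snoc d w)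
  let ?m = "n * k ^ length w + digits_value k w"
  have "?m > 0" using assms(1,2) by simp
  moreover have "d < k" using snoc.prems by simp
  moreover have "n * k ^ length (w @ [d]) + digits_value k (w @ [d]) = ?m * k + d"
    by (simp add: algebra_simps)
  ultimately show ?case
    using snoc base_digits_snoc[OF assms(1)] by (simp only:) simp
qed

lemma all_extensions_iff_all_suffixes:
  assumes "k \<ge> 2" and "n > 0"
  shows "(\<forall>l s. s < k ^ l \<longrightarrow> P (base_digits k (n * k ^ l + s)))
     \<longleftrightarrow> (\<forall>w. set w \<subseteq> {..<k} \<longrightarrow> P (base_digits k n @ w))"
proof (intro iffI allI impI)
  fix w assume P: "\<forall>l s. s < k ^ l \<longrightarrow> P (base_digits k (n * k ^ l + s))"
    and w: "set w \<subseteq> {..<k}"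
  have "digits_value k w < k ^ length w"
    using w by (rule digits_value_less)
  with P have "P (base_digits k (n * k ^ length w + digits_value k w))"
    by blast
  then show "P (base_digits k n @ w)"
    by (simp only: base_digits_append[OF assms w])
next
  fix l s assume P: "\<forall>w. set w \<subseteq> {..<k} \<longrightarrow> P (base_digits k n @ w)"
    and "s < k ^ l"
  then obtain w where w: "length w = l" "set w \<subseteq> {..<k}" "digits_value k w = s"
    using digits_value_surj[of k s l] assms(1) by auto
  with P have "P (base_digits k n @ w)"
    by blast
  then have "P (base_digits k (n * k ^ length w + digits_value k w))"
    by (simp only: base_digits_append[OF assms w(2)])
  with w show "P (base_digits k (n * k ^ l + s))"
    by simp
qed

definition dfa :: "nat \<Rightarrow> 's set \<Rightarrow> ('s \<Rightarrow> nat \<Rightarrow> 's) \<Rightarrow> 's \<Rightarrow> bool" where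
  "dfa k Q delta q0 \<longleftrightarrow> finite Q \<and> q0 \<in> Q \<and> (\<forall>q\<in>Q. \<forall>d<k. delta q d \<in> Q)"

lemma k_automaticE:
  assumes "k_automatic k u"
  obtains Q :: "nat set" and delta q0 tau where "dfa k Q delta q0"
    and "\<And>n. u n = tau (foldl delta q0 (base_digits k n))"
  using assms unfolding k_automatic_def dfa_def by blast

text \<open>States need not be naturals: a finite state set injects into them.\<close>

lemma k_automaticI:
  fixes Q :: "'s set" and delta :: "'s \<Rightarrow> nat \<Rightarrow> 's" and tau :: "'s \<Rightarrow> 'a"
  assumes "dfa k Q delta q0" and u: "\<And>n. u n = tau (foldl delta q0 (base_digits k n))"
  shows "k_automatic k u"
proof -
  have "finite Q" and "q0 \<in> Q"
    and closed: "\<And>q d. q \<in> Q \<Longrightarrow> d < k \<Longrightarrow> delta q d \<in> Q"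
    using assms(1) unfolding dfa_def by auto
  obtain f :: "'s \<Rightarrow> nat" where f: "inj_on f Q"
    using finite_imp_inj_to_nat_seg[OF \<open>finite Q\<close>] by blast
  define g where "g = inv_into Q f"
  define delta' where "delta' m d = f (delta (g m) d)" for m d
  have fold: "foldl delta q w \<in> Q \<and> foldl delta' (f q) w = f (foldl delta q w)"
    if "q \<in> Q" "set w \<subseteq> {..<k}" for q w
    using that
  proof (induction w arbitrary: q)
    case Nil
    then show ?case by simp
  next
    case (Cons d w)
    then show ?case by (simp add: delta'_def g_def f closed)
  qed
  have "finite (f ` Q)" and "f q0 \<in> f ` Q" using \<open>finite Q\<close> \<open>q0 \<in> Q\<close> by auto
  moreover have "\<forall>m\<in>f ` Q. \<forall>d<k. delta' m d \<in> f ` Q"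
    using closed f by (auto simp: delta'_def g_def)
  moreover have "\<forall>n. u n = (tau \<circ> g) (foldl delta' (f q0) (base_digits k n))"
    using u fold[OF \<open>q0 \<in> Q\<close> base_digits_less] by (simp add: g_def f)
  ultimately show ?thesis
    unfolding k_automatic_def
    by (intro exI[of _ "f ` Q"] exI[of _ delta'] exI[of _ "f q0"] exI[of _ "tau \<circ> g"]) blast
qed

text \<open>The flag records whether a digit has been read.  It is needed because the empty expansion
  of 0 is never padded by leading zeros, so the output at 0 cannot be read off the initial pair.\<close>

definition flagged_product ::
    "('p \<Rightarrow> nat \<Rightarrow> 'p) \<Rightarrow> ('q \<Rightarrow> nat \<Rightarrow> 'q) \<Rightarrow> bool \<times> 'p \<times> 'q \<Rightarrow> nat \<Rightarrow> bool \<times> 'p \<times> 'q" where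
  "flagged_product da db = (\<lambda>(_, x, y) d. (True, da x d, db y d))"

lemma foldl_flagged_product:
  "foldl (flagged_product da db) (r, x, y) w = (r \<or> w \<noteq> [], foldl da x w, foldl db y w)"
  by (induction w arbitrary: r x y) (auto simp: flagged_product_def)

lemma dfa_flagged_product:
  assumes "dfa k Qa da qa" and "dfa k Qb db qb"
  shows "dfa k (UNIV \<times> Qa \<times> Qb) (flagged_product da db) (False, qa, qb)"
  using assms unfolding dfa_def flagged_product_def by auto

lemma k_automatic_of_pair_states:
  assumes "k \<ge> 2" and "dfa k Qa da qa" and "dfa k Qb db qb"
    and c: "\<And>n. n > 0 \<Longrightarrow>
      c n = F (foldl da qa (base_digits k n)) (foldl db qb (base_digits k n))"
  shows "k_automatic k c"
proof (rule k_automaticI[OF dfa_flagged_product[OF assms(2,3)]])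
  fix n
  show "c n = (\<lambda>(r, x, y). if r then F x y else c 0)
      (foldl (flagged_product da db) (False, qa, qb) (base_digits k n))"
  proof (cases "n = 0")
    case True
    then have "base_digits k n = []" by (simp add: base_digits_eq_Nil_iff[OF assms(1)])
    with True show ?thesis by (simp add: foldl_flagged_product)
  next
    case False
    then have "base_digits k n \<noteq> []" by (simp add: base_digits_eq_Nil_iff[OF assms(1)])
    with False show ?thesis by (simp add: foldl_flagged_product c)
  qed
qed

theorem lemma4p2:
  fixes k :: nat and a b :: "nat \<Rightarrow> 'a" and c :: "nat \<Rightarrow> nat"
  assumes "k \<ge> 2"
    and "k_automatic k a" and "k_automatic k b"
    and "\<And>n. c n = (if (\<forall>l::nat. \<forall>s::nat. s < k ^ l \<longrightarrow>
                              a (n * k ^ l + s) = b (n * k ^ l + s)) then 1 else 0)"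
  shows "k_automatic k c"
proof -
  obtain Qa :: "nat set" and da qa ta where A: "dfa k Qa da qa"
    and a: "\<And>n. a n = ta (foldl da qa (base_digits k n))"
    using k_automaticE[OF assms(2)] by blast
  obtain Qb :: "nat set" and db qb tb where B: "dfa k Qb db qb"
    and b: "\<And>n. b n = tb (foldl db qb (base_digits k n))"
    using k_automaticE[OF assms(3)] by blast
  define good where
    "good x y \<longleftrightarrow> (\<forall>w. set w \<subseteq> {..<k} \<longrightarrow> ta (foldl da x w) = tb (foldl db y w))" for x y
  have "c n = (if good (foldl da qa (base_digits k n)) (foldl db qb (base_digits k n)) then 1 else 0)"
    if "n > 0" for n
  proof -
    have "(\<forall>l s. s < k ^ l \<longrightarrow> a (n * k ^ l + s) = b (n * k ^ l + s))
        \<longleftrightarrow> good (foldl da qa (base_digits k n)) (foldl db qb (base_digits k n))"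
      unfolding good_def a b
      using all_extensions_iff_all_suffixes[OF assms(1) that,
          of "\<lambda>ds. ta (foldl da qa ds) = tb (foldl db qb ds)"]
      by simp
    then show ?thesis by (simp only: assms(4))
  qed
  then show ?thesis by (rule k_automatic_of_pair_states[OF assms(1) A B])
qed

end
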